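(* Let $\mathcal O$ be any quantum algorithm (unitary, using no measurements) such that for every $x$, $\mathcal O\ket{x}\ket{\mathbf 0}=\ket{x}\ket{\Psi_x}=\ket{x}(\ket{\Psi_x^1}+\ket{\Psi_x^0})$, and let $\chi:\mathbb Z\to\{0,1\}$ be a Boolean function such that $\ket{\Psi_x^1}$ (the good part) and $\ket{\Psi_x^0}$ (the bad part) are the components of $\ket{\Psi_x}$ on computational basis states $\ket{z}$ with $\chi(z)=1$ and $\chi(z)=0$ respectively, where $\sin^2(\theta_x)=\langle\Psi_x^1|\Psi_x^1\rangle$ with $0<\theta_x\le\pi/2$ for every $x$. Let $M\ge1$ be an integer. Then there exists a quantum algorithm $Par\_Est\_Zero(\mathcal O,\chi,M)$ that maps $\ket{x}\ket{\mathbf 0}\ket{0}\mapsto\ket{x}\otimes\big(\alpha_x\ket{u_x}\ket{1}+\beta_x\ket{u'_x}\ket{0}\big)$ (with normalized states $\ket{u_x},\ket{u'_x}$), where for every $x$, $|\alpha_x|^2=\dfrac{\sin^2(M\theta_x)}{M^2\sin^2(\theta_x)}$. It uses $\mathcal O$ and its inverse $O(M)$ times. *)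

theory Defs
  imports Complex_Main
begin

text \<open>A finite-dimensional state space is given by a finite set S of basis labels;
  states are functions S \<Rightarrow> complex (zero outside S); linear operators are
  matrices given as kernels K i j (row i, column j).\<close>

type_synonym 'i kernel = "'i \<Rightarrow> 'i \<Rightarrow> complex"

definition ket :: "'i \<Rightarrow> 'i \<Rightarrow> complex" where
  "ket j = (\<lambda>i. if i = j then 1 else 0)"

definition apply_op :: "'i set \<Rightarrow> 'i kernel \<Rightarrow> ('i \<Rightarrow> complex) \<Rightarrow> ('i \<Rightarrow> complex)" where
  "apply_op S K v = (\<lambda>i. if i \<in> S then (\<Sum>j\<in>S. K i j * v j) else 0)"

definition adj :: "'i kernel \<Rightarrow> 'i kernel" where
  "adj K = (\<lambda>i j. cnj (K j i))"

definition unitary_on :: "'i set \<Rightarrow> 'i kernel \<Rightarrow> bool" where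
  "unitary_on S K \<longleftrightarrow> finite S \<and> (\<forall>i j. (i \<notin> S \<or> j \<notin> S) \<longrightarrow> K i j = 0) \<and>
     (\<forall>i\<in>S. \<forall>j\<in>S. (\<Sum>k\<in>S. cnj (K k i) * K k j) = (if i = j then 1 else 0))"

text \<open>Registers of the algorithm: input x, workspace z of the oracle, an extra
  ancilla register a, and the output flag qubit b.\<close>
type_synonym idx = "nat \<times> nat \<times> nat \<times> bool"

definition space :: "nat \<Rightarrow> nat \<Rightarrow> nat \<Rightarrow> idx set" where
  "space nx nz na = {0..<nx} \<times> {0..<nz} \<times> {0..<na} \<times> (UNIV :: bool set)"

definition lift :: "(nat \<times> nat) kernel \<Rightarrow> idx kernel" where
  "lift Or = (\<lambda>(x,z,a,b) (x',z',a',b'). if a = a' \<and> b = b' then Or (x,z) (x',z') else 0)"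

datatype gate = Query | QueryInv | Fixed "idx kernel"

fun gate_kernel :: "(nat \<times> nat) kernel \<Rightarrow> gate \<Rightarrow> idx kernel" where
  "gate_kernel Or Query = lift Or"
| "gate_kernel Or QueryInv = lift (adj Or)"
| "gate_kernel Or (Fixed U) = U"

fun gate_ok :: "idx set \<Rightarrow> gate \<Rightarrow> bool" where
  "gate_ok S (Fixed U) = unitary_on S U"
| "gate_ok S _ = True"

fun is_query :: "gate \<Rightarrow> bool" where
  "is_query (Fixed U) = False"
| "is_query _ = True"

definition num_queries :: "gate list \<Rightarrow> nat" where
  "num_queries gs = length (filter is_query gs)"

text \<open>Run a gate list (first gate applied first) on an initial state.\<close>
fun run :: "idx set \<Rightarrow> (nat \<times> nat) kernel \<Rightarrow> gate list \<Rightarrow> (idx \<Rightarrow> complex) \<Rightarrow> (idx \<Rightarrow> complex)" where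
  "run S Or [] v = v"
| "run S Or (g # gs) v = run S Or gs (apply_op S (gate_kernel Or g) v)"

end

theory Submission
  imports Defs
begin

text \<open>The ancilla register \<open>a \<in> {0..<M}\<close> is put into the uniform superposition by a
  Householder reflection exchanging \<open>|0\<rangle>\<close> with the uniform vector. Layer \<open>j\<close> applies one
  Grover iteration (phase flip of the bad part, then the reflection
  \<open>\<O> (I - 2 |0\<rangle>\<langle>0|) \<O>\<^sup>\<dagger> = I - 2 |\<Psi>\<rangle>\<langle>\<Psi>|\<close>) to the branches with \<open>a > j\<close>, so after
  \<open>M - 1\<close> layers branch \<open>a\<close> carries \<open>p\<^sub>a \<Psi>\<^sub>1 + q\<^sub>a \<Psi>\<^sub>0\<close> with \<open>sin \<theta> p\<^sub>a = sin ((2a+1)\<theta>)\<close> and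
  \<open>cos \<theta> q\<^sub>a = cos ((2a+1)\<theta>)\<close>. Applying the Householder reflection again moves the average
  of the branches to ancilla value \<open>0\<close>, which is flagged. Its squared norm is
  \<open>((\<Sum>\<^sub>a sin ((2a+1)\<theta>))\<^sup>2 + (\<Sum>\<^sub>a cos ((2a+1)\<theta>))\<^sup>2) / M\<^sup>2 = sin\<^sup>2 (M\<theta>) / (M sin \<theta>)\<^sup>2\<close>
  by the telescoping identities \<open>sin \<theta> \<Sum>\<^sub>a\<^sub><\<^sub>M sin ((2a+1)\<theta>) = sin\<^sup>2 (M\<theta>)\<close> and
  \<open>sin \<theta> \<Sum>\<^sub>a\<^sub><\<^sub>M cos ((2a+1)\<theta>) = sin (M\<theta>) cos (M\<theta>)\<close>.\<close>

section \<open>Finite-dimensional linear algebra\<close>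

lemma apply_op_outside: "i \<notin> S \<Longrightarrow> apply_op S K v i = 0"
  unfolding apply_op_def by simp

lemma run_append: "run S Or (gs @ hs) v = run S Or hs (run S Or gs v)"
  by (induction gs arbitrary: v) auto

lemma apply_op_ket:
  assumes "j \<in> S" "finite S"
  shows "apply_op S K (ket j) i = (if i \<in> S then K i j else 0)"
  using assms unfolding apply_op_def ket_def by (simp add: if_distrib cong: if_cong)

lemma traceless_projection_eq_0:
  fixes E :: "'i kernel"
  assumes "finite S"
    and hermitian: "\<And>i j. E j i = cnj (E i j)"
    and idempotent: "\<And>i j. i \<in> S \<Longrightarrow> j \<in> S \<Longrightarrow> (\<Sum>k\<in>S. E i k * E k j) = E i j"
    and traceless: "(\<Sum>i\<in>S. E i i) = 0"
    and "i \<in> S" "j \<in> S"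
  shows "E i j = 0"
proof -
  have "(\<Sum>i\<in>S. \<Sum>j\<in>S. complex_of_real ((cmod (E i j))\<^sup>2)) = (\<Sum>i\<in>S. E i i)"
  proof (rule sum.cong[OF refl])
    fix i assume "i \<in> S"
    show "(\<Sum>j\<in>S. complex_of_real ((cmod (E i j))\<^sup>2)) = E i i"
      using idempotent[OF \<open>i \<in> S\<close> \<open>i \<in> S\<close>]
      by (simp only: complex_norm_square hermitian[symmetric])
  qed
  hence "(\<Sum>i\<in>S. \<Sum>j\<in>S. (cmod (E i j))\<^sup>2) = 0"
    by (simp only: traceless of_real_sum[symmetric] of_real_eq_0_iff)
  hence "(cmod (E i j))\<^sup>2 = 0"
    using \<open>finite S\<close> \<open>i \<in> S\<close> \<open>j \<in> S\<close> by (simp add: sum_nonneg_eq_0_iff sum_nonneg)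
  thus ?thesis by simp
qed

text \<open>In finite dimension a left inverse is a right inverse: \<open>E = I - K K\<^sup>*\<close> is a
  Hermitian idempotent of trace \<open>card S - card S = 0\<close>.\<close>

lemma unitary_on_rows_orthonormal:
  assumes U: "unitary_on S K" and "i \<in> S" "j \<in> S"
  shows "(\<Sum>k\<in>S. K i k * cnj (K j k)) = (if i = j then 1 else 0)"
proof -
  have fin: "finite S"
    and cols: "\<And>i j. i \<in> S \<Longrightarrow> j \<in> S \<Longrightarrow> (\<Sum>k\<in>S. cnj (K k i) * K k j) = (if i = j then 1 else 0)"
    using U unfolding unitary_on_def by auto
  define P where "P i j = (\<Sum>k\<in>S. K i k * cnj (K j k))" for i j
  define E where "E i j = (if i = j then 1 else 0) - P i j" for i j
  have "(\<Sum>i\<in>S. P i i) = (\<Sum>k\<in>S. \<Sum>i\<in>S. cnj (K i k) * K i k)"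
    unfolding P_def by (subst sum.swap) (simp add: mult.commute)
  also have "\<dots> = of_nat (card S)"
    using cols by simp
  finally have trace_P: "(\<Sum>i\<in>S. P i i) = of_nat (card S)" .
  have PP: "(\<Sum>k\<in>S. P i k * P k j) = P i j" for i j
  proof -
    have "(\<Sum>k\<in>S. P i k * P k j)
        = (\<Sum>k\<in>S. \<Sum>l\<in>S. \<Sum>m\<in>S. K i l * (cnj (K k l) * K k m) * cnj (K j m))"
      unfolding P_def by (simp add: sum_product mult.assoc mult.left_commute)
    also have "\<dots> = (\<Sum>l\<in>S. \<Sum>m\<in>S. \<Sum>k\<in>S. K i l * (cnj (K k l) * K k m) * cnj (K j m))"
      by (subst sum.swap, rule sum.cong, rule refl, rule sum.swap)
    also have "\<dots> = (\<Sum>l\<in>S. \<Sum>m\<in>S. K i l * (\<Sum>k\<in>S. cnj (K k l) * K k m) * cnj (K j m))"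
      by (simp add: sum_distrib_left sum_distrib_right)
    also have "\<dots> = (\<Sum>l\<in>S. \<Sum>m\<in>S. (if l = m then K i l * cnj (K j m) else 0))"
      using cols by (intro sum.cong) auto
    also have "\<dots> = P i j"
      unfolding P_def using fin by simp
    finally show ?thesis .
  qed
  have "E i j = 0"
  proof (rule traceless_projection_eq_0[OF fin _ _ _ assms(2,3)])
    show "E j i = cnj (E i j)" for i j
      unfolding E_def P_def by (auto simp: mult.commute)
    show "(\<Sum>k\<in>S. E i k * E k j) = E i j" if "i \<in> S" "j \<in> S" for i j
    proof -
      have "(\<Sum>k\<in>S. E i k * E k j) = (\<Sum>k\<in>S. (if k = i then (if k = j then 1 else 0) else 0))
         - (\<Sum>k\<in>S. (if k = i then P k j else 0)) - (\<Sum>k\<in>S. (if k = j then P i k else 0))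
         + (\<Sum>k\<in>S. P i k * P k j)"
        unfolding E_def
        by (simp add: sum.distrib[symmetric] sum_subtractf[symmetric], intro sum.cong)
          (auto simp: algebra_simps)
      also have "\<dots> = (if i = j then 1 else 0) - P i j - P i j + P i j"
        using that fin PP[of i j] by simp
      finally show ?thesis unfolding E_def by simp
    qed
    show "(\<Sum>i\<in>S. E i i) = 0"
      unfolding E_def using trace_P by (simp add: sum_subtractf)
  qed
  thus ?thesis unfolding E_def P_def by (simp split: if_splits)
qed

lemma unitary_on_right_inverse:
  assumes U: "unitary_on S K" and "i \<in> S"
  shows "(\<Sum>k\<in>S. K i k * (\<Sum>l\<in>S. cnj (K l k) * g l)) = g i"
proof -
  have fin: "finite S" using U unfolding unitary_on_def by auto
  have "(\<Sum>k\<in>S. K i k * (\<Sum>l\<in>S. cnj (K l k) * g l)) = (\<Sum>k\<in>S. \<Sum>l\<in>S. g l * (K i k * cnj (K l k)))"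
    by (simp add: sum_distrib_left ac_simps)
  also have "\<dots> = (\<Sum>l\<in>S. g l * (\<Sum>k\<in>S. K i k * cnj (K l k)))"
    by (subst sum.swap) (simp add: sum_distrib_left)
  also have "\<dots> = (\<Sum>l\<in>S. if l = i then g i else 0)"
    using unitary_on_rows_orthonormal[OF U \<open>i \<in> S\<close>] by (intro sum.cong) auto
  also have "\<dots> = g i" using fin \<open>i \<in> S\<close> by simp
  finally show ?thesis .
qed

definition diag_kernel :: "'i set \<Rightarrow> ('i \<Rightarrow> complex) \<Rightarrow> 'i kernel" where
  "diag_kernel S d = (\<lambda>i j. if i = j \<and> i \<in> S then d i else 0)"

lemma unitary_on_diag_kernel:
  assumes "finite S" and "\<And>i. i \<in> S \<Longrightarrow> cnj (d i) * d i = 1"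
  shows "unitary_on S (diag_kernel S d)"
proof -
  have "(\<Sum>k\<in>S. cnj (diag_kernel S d k i) * diag_kernel S d k j) = (if i = j then 1 else 0)"
    if "i \<in> S" "j \<in> S" for i j
  proof -
    have "(\<Sum>k\<in>S. cnj (diag_kernel S d k i) * diag_kernel S d k j)
        = (\<Sum>k\<in>S. if k = i then (if i = j then cnj (d i) * d i else 0) else 0)"
      by (intro sum.cong) (auto simp: diag_kernel_def)
    thus ?thesis using that assms by simp
  qed
  thus ?thesis using assms unfolding unitary_on_def diag_kernel_def by auto
qed

lemma apply_op_diag_kernel:
  assumes "finite S"
  shows "apply_op S (diag_kernel S d) v = (\<lambda>i. if i \<in> S then d i * v i else 0)"
proof -
  have "(\<Sum>j\<in>S. diag_kernel S d i j * v j) = (\<Sum>j\<in>S. if j = i then d i * v i else 0)" if "i \<in> S" for i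
    by (intro sum.cong) (auto simp: diag_kernel_def that)
  thus ?thesis unfolding apply_op_def using assms by (auto intro!: ext)
qed

definition perm_kernel :: "'i set \<Rightarrow> ('i \<Rightarrow> 'i) \<Rightarrow> 'i kernel" where
  "perm_kernel S \<sigma> = (\<lambda>i j. if j \<in> S \<and> i = \<sigma> j then 1 else 0)"

locale involution_on =
  fixes S :: "'i set" and \<sigma> :: "'i \<Rightarrow> 'i"
  assumes maps_to: "i \<in> S \<Longrightarrow> \<sigma> i \<in> S"
    and involutive: "i \<in> S \<Longrightarrow> \<sigma> (\<sigma> i) = i"
begin

lemma eq_iff_swap: "i \<in> S \<Longrightarrow> j \<in> S \<Longrightarrow> i = \<sigma> j \<longleftrightarrow> j = \<sigma> i"
  using involutive by metis

lemma unitary_on_perm_kernel: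
  assumes "finite S"
  shows "unitary_on S (perm_kernel S \<sigma>)"
proof -
  have "(\<Sum>k\<in>S. cnj (perm_kernel S \<sigma> k i) * perm_kernel S \<sigma> k j) = (if i = j then 1 else 0)"
    if "i \<in> S" "j \<in> S" for i j
  proof -
    have "(\<Sum>k\<in>S. cnj (perm_kernel S \<sigma> k i) * perm_kernel S \<sigma> k j)
        = (\<Sum>k\<in>S. if k = \<sigma> i then (if i = j then 1 else 0) else 0)"
      using that involutive by (intro sum.cong) (auto simp: perm_kernel_def eq_iff_swap, metis)
    thus ?thesis using that maps_to assms by simp
  qed
  thus ?thesis using assms maps_to unfolding unitary_on_def perm_kernel_def by auto
qed

lemma apply_op_perm_kernel:
  assumes "finite S"
  shows "apply_op S (perm_kernel S \<sigma>) v = (\<lambda>i. if i \<in> S then v (\<sigma> i) else 0)"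
proof -
  have "(\<Sum>j\<in>S. perm_kernel S \<sigma> i j * v j) = (\<Sum>j\<in>S. if j = \<sigma> i then v (\<sigma> i) else 0)" if "i \<in> S" for i
    using that by (intro sum.cong) (auto simp: perm_kernel_def eq_iff_swap)
  thus ?thesis unfolding apply_op_def using assms maps_to by (auto intro!: ext)
qed

end

lemma exists_normalized_factor:
  fixes G :: "'a \<Rightarrow> complex"
  assumes "finite T" "t\<^sub>0 \<in> T" and supp: "\<And>p. p \<notin> T \<Longrightarrow> G p = 0"
  shows "\<exists>\<alpha> u. (\<Sum>p\<in>T. (cmod (u p))\<^sup>2) = 1 \<and> (\<forall>p. G p = \<alpha> * u p)
               \<and> (cmod \<alpha>)\<^sup>2 = (\<Sum>p\<in>T. (cmod (G p))\<^sup>2)"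
proof (cases "(\<Sum>p\<in>T. (cmod (G p))\<^sup>2) = 0")
  case True
  hence "G p = 0" for p
    using assms by (cases "p \<in> T") (simp_all add: sum_nonneg_eq_0_iff)
  thus ?thesis
    using True assms by (intro exI[of _ 0] exI[of _ "\<lambda>p. if p = t\<^sub>0 then 1 else 0"])
      (simp add: if_distrib[where f = "\<lambda>c. (cmod c)\<^sup>2"] cong: if_cong)
next
  case False
  define N where "N = (\<Sum>p\<in>T. (cmod (G p))\<^sup>2)"
  have "N > 0" using False \<open>finite T\<close> unfolding N_def by (simp add: sum_nonneg less_le)
  show ?thesis
  proof (intro exI conjI allI)
    have "(\<Sum>p\<in>T. (cmod (G p / complex_of_real (sqrt N)))\<^sup>2) = (\<Sum>p\<in>T. (cmod (G p))\<^sup>2 / N)"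
      using \<open>N > 0\<close> by (simp add: norm_divide power_divide)
    also have "\<dots> = 1"
      using \<open>N > 0\<close> unfolding N_def sum_divide_distrib[symmetric] by simp
    finally show "(\<Sum>p\<in>T. (cmod (G p / complex_of_real (sqrt N)))\<^sup>2) = 1" .
    show "G p = complex_of_real (sqrt N) * (G p / complex_of_real (sqrt N))" for p
      using \<open>N > 0\<close> by simp
    show "(cmod (complex_of_real (sqrt N)))\<^sup>2 = (\<Sum>p\<in>T. (cmod (G p))\<^sup>2)"
      using \<open>N > 0\<close> unfolding N_def[symmetric] by simp
  qed
qed

section \<open>The register space\<close>

lemma finite_space [simp]: "finite (space nx nz na)"
  by (simp add: space_def)

lemma mem_space [simp]: "(x, z, a, b) \<in> space nx nz na \<longleftrightarrow> x < nx \<and> z < nz \<and> a < na"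
  by (simp add: space_def)

lemma sum_space:
  "(\<Sum>j\<in>space nx nz na. f j) = (\<Sum>x<nx. \<Sum>z<nz. \<Sum>a<na. f (x, z, a, True) + f (x, z, a, False))"
  unfolding space_def by (simp add: sum.cartesian_product' atLeast0LessThan UNIV_bool add.commute)

lemma sum_space_fiber:
  assumes "x < nx" "z < nz"
    and supp: "\<And>x' z' a' b'. f (x', z', a', b') \<noteq> 0 \<Longrightarrow> x' = x \<and> z' = z \<and> b' = b"
  shows "(\<Sum>k\<in>space nx nz na. f k) = (\<Sum>a<na. f (x, z, a, b))"
proof -
  have "(\<Sum>k\<in>space nx nz na. f k) = (\<Sum>k\<in>(\<lambda>a. (x, z, a, b)) ` {..<na}. f k)"
  proof (rule sum.mono_neutral_right)
    show "\<forall>k\<in>space nx nz na - (\<lambda>a. (x, z, a, b)) ` {..<na}. f k = 0"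
    proof
      fix k assume k: "k \<in> space nx nz na - (\<lambda>a. (x, z, a, b)) ` {..<na}"
      obtain x' z' a' b' where "k = (x', z', a', b')" by (cases k)
      with k supp[of x' z' a' b'] show "f k = 0" by auto
    qed
  qed (use assms in auto)
  also have "\<dots> = (\<Sum>a<na. f (x, z, a, b))"
    by (subst sum.reindex) (auto simp: inj_on_def)
  finally show ?thesis .
qed

lemma space_eqI:
  assumes "\<And>x z a b. x < nx \<Longrightarrow> z < nz \<Longrightarrow> a < na \<Longrightarrow> v (x, z, a, b) = w (x, z, a, b)"
    and "\<And>i. i \<notin> space nx nz na \<Longrightarrow> v i = 0" and "\<And>i. i \<notin> space nx nz na \<Longrightarrow> w i = 0"
  shows "v = w"
proof
  fix i :: idx
  obtain x z a b where "i = (x, z, a, b)" by (cases i)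
  thus "v i = w i" using assms by (cases "i \<in> space nx nz na") auto
qed

lemma sum_oracle_space:
  "(\<Sum>k\<in>{0..<nx} \<times> {0..<nz}. f k) = (\<Sum>x<(nx::nat). \<Sum>z<(nz::nat). f (x, z))"
  unfolding atLeast0LessThan by (rule sum.cartesian_product')

lemma apply_op_lift:
  assumes "x < nx" "z < nz" "a < na"
  shows "apply_op (space nx nz na) (lift K) v (x, z, a, b)
       = (\<Sum>x'<nx. \<Sum>z'<nz. K (x, z) (x', z') * v (x', z', a, b))"
proof -
  have "(\<Sum>a'<na. (if a = a' \<and> b then K (x, z) (x', z') else 0) * v (x', z', a', True)
      + (if a = a' \<and> \<not> b then K (x, z) (x', z') else 0) * v (x', z', a', False))
      = K (x, z) (x', z') * v (x', z', a, b)" for x' z'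
    using assms by (cases b) (simp_all add: if_distrib[where f = "\<lambda>c. c * _"] cong: if_cong)
  thus ?thesis using assms unfolding apply_op_def by (simp add: sum_space lift_def)
qed

definition ancilla_op :: "nat \<Rightarrow> nat \<Rightarrow> nat \<Rightarrow> (nat \<Rightarrow> nat \<Rightarrow> real) \<Rightarrow> idx kernel" where
  "ancilla_op nx nz na A = (\<lambda>(x, z, a, b) (x', z', a', b').
     if x = x' \<and> z = z' \<and> b = b' \<and> x < nx \<and> z < nz \<and> a < na \<and> a' < na
     then complex_of_real (A a a') else 0)"

lemma apply_op_ancilla_op:
  assumes "x < nx" "z < nz" "a < na"
  shows "apply_op (space nx nz na) (ancilla_op nx nz na A) v (x, z, a, b)
       = (\<Sum>a'<na. complex_of_real (A a a') * v (x, z, a', b))"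
proof -
  have "(\<Sum>j\<in>space nx nz na. ancilla_op nx nz na A (x, z, a, b) j * v j)
      = (\<Sum>a'<na. ancilla_op nx nz na A (x, z, a, b) (x, z, a', b) * v (x, z, a', b))"
    using assms by (intro sum_space_fiber) (auto simp: ancilla_op_def split: if_splits)
  thus ?thesis unfolding apply_op_def using assms by (simp add: ancilla_op_def)
qed

lemma unitary_on_ancilla_op:
  assumes orth: "\<And>i j. i < na \<Longrightarrow> j < na \<Longrightarrow> (\<Sum>k<na. A k i * A k j) = (if i = j then 1 else 0)"
  shows "unitary_on (space nx nz na) (ancilla_op nx nz na A)"
  unfolding unitary_on_def
proof (intro conjI allI impI ballI)
  fix i j assume "i \<notin> space nx nz na \<or> j \<notin> space nx nz na"
  thus "ancilla_op nx nz na A i j = 0" by (cases i; cases j) (auto simp: ancilla_op_def)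
next
  fix i j assume "i \<in> space nx nz na" "j \<in> space nx nz na"
  then obtain x z a b x' z' a' b' where ij: "i = (x, z, a, b)" "j = (x', z', a', b')"
    and r: "x < nx" "z < nz" "a < na" "x' < nx" "z' < nz" "a' < na"
    by (cases i; cases j) auto
  have "(\<Sum>k\<in>space nx nz na. cnj (ancilla_op nx nz na A k i) * ancilla_op nx nz na A k j)
      = (\<Sum>c<na. cnj (ancilla_op nx nz na A (x, z, c, b) i) * ancilla_op nx nz na A (x, z, c, b) j)"
    using r by (intro sum_space_fiber) (auto simp: ancilla_op_def ij split: if_splits)
  also have "\<dots> = (if (x, z, b) = (x', z', b') then complex_of_real (\<Sum>c<na. A c a * A c a') else 0)"
    using r by (auto simp: ancilla_op_def ij intro!: sum.cong)
  also have "\<dots> = (if i = j then 1 else 0)"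
    using orth[OF r(3,6)] by (auto simp: ij simp flip: of_real_mult of_real_sum)
  finally show "(\<Sum>k\<in>space nx nz na. cnj (ancilla_op nx nz na A k i) * ancilla_op nx nz na A k j)
      = (if i = j then 1 else 0)" .
qed simp

section \<open>Householder reflections\<close>

definition householder :: "nat \<Rightarrow> (nat \<Rightarrow> real) \<Rightarrow> nat \<Rightarrow> nat \<Rightarrow> real" where
  "householder n w i j = (if i = j then 1 else 0) - 2 / (\<Sum>k<n. (w k)\<^sup>2) * w i * w j"

lemma householder_sym: "householder n w i j = householder n w j i"
  unfolding householder_def by simp

lemma householder_orthogonal:
  assumes "i < n" "j < n"
  shows "(\<Sum>k<n. householder n w k i * householder n w k j) = (if i = j then 1 else 0)"
proof -
  define N where "N = (\<Sum>k<n. (w k)\<^sup>2)"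
  define c where "c = 2 / N"
  have cN: "c * c * N = 2 * c"
    unfolding c_def by (cases "N = 0") (auto simp: field_simps power2_eq_square)
  have "(\<Sum>k<n. householder n w k i * householder n w k j)
      = (\<Sum>k<n. (if k = i then (if k = j then 1 else 0) else 0)
          - (if k = i then c * w k * w j else 0) - (if k = j then c * w k * w i else 0)
          + c * c * w i * w j * (w k)\<^sup>2)"
    unfolding householder_def c_def N_def
    by (intro sum.cong) (auto simp: algebra_simps power2_eq_square)
  also have "\<dots> = (if i = j then 1 else 0) - c * w i * w j - c * w j * w i + c * c * N * (w i * w j)"
    using assms by (simp add: sum.distrib sum_subtractf sum_distrib_left[symmetric] N_def ac_simps)
  also have "\<dots> = (if i = j then 1 else 0)"
    unfolding cN by simp
  finally show ?thesis .
qed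

text \<open>The reflection exchanging the first basis vector with the uniform superposition.\<close>

definition uniform_reflection :: "nat \<Rightarrow> nat \<Rightarrow> nat \<Rightarrow> real" where
  "uniform_reflection n = householder n (\<lambda>k. (if k = 0 then 1 else 0) - 1 / sqrt (real n))"

lemma uniform_reflection_orthogonal:
  "i < n \<Longrightarrow> j < n \<Longrightarrow> (\<Sum>k<n. uniform_reflection n k i * uniform_reflection n k j) = (if i = j then 1 else 0)"
  unfolding uniform_reflection_def by (rule householder_orthogonal)

lemma uniform_reflection_first_row:
  assumes "1 \<le> n" "k < n"
  shows "uniform_reflection n 0 k = 1 / sqrt (real n)"
proof -
  define u where "u = 1 / sqrt (real n)"
  define w :: "nat \<Rightarrow> real" where "w = (\<lambda>k. (if k = 0 then 1 else 0) - u)"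
  have "real n * u\<^sup>2 = 1" unfolding u_def using assms by (simp add: power_divide)
  moreover have "(\<Sum>k<n. (w k)\<^sup>2) = (\<Sum>k<n. (if k = 0 then 1 - 2 * u else 0) + u\<^sup>2)"
    unfolding w_def by (intro sum.cong) (auto simp: power2_eq_square algebra_simps)
  ultimately have N: "(\<Sum>k<n. (w k)\<^sup>2) = 2 - 2 * u"
    using assms by (simp add: sum.distrib)
  show ?thesis
  proof (cases "n = 1")
    case True
    thus ?thesis using assms unfolding uniform_reflection_def householder_def by simp
  next
    case False
    hence "u < 1" unfolding u_def using assms by (simp add: divide_less_eq)
    hence "2 / (2 - 2 * u) * w 0 = 1" unfolding w_def by (simp add: field_simps)
    hence "householder n w 0 k = (if 0 = k then 1 else 0) - w k"
      unfolding householder_def N by (simp add: ac_simps)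
    hence "householder n w 0 k = u"
      by (simp add: w_def)
    thus ?thesis unfolding uniform_reflection_def u_def[symmetric] w_def[symmetric] .
  qed
qed

lemma uniform_reflection_first_column:
  "1 \<le> n \<Longrightarrow> k < n \<Longrightarrow> uniform_reflection n k 0 = 1 / sqrt (real n)"
  using uniform_reflection_first_row[of n k] householder_sym[of n _ k 0]
  unfolding uniform_reflection_def by simp

section \<open>Grover amplitudes\<close>

text \<open>One Grover iteration acting on the amplitudes \<open>(p, q)\<close> of the state \<open>p \<Psi>\<^sub>1 + q \<Psi>\<^sub>0\<close>,
  where \<open>s\<^sub>1 = \<parallel>\<Psi>\<^sub>1\<parallel>\<^sup>2\<close> and \<open>s\<^sub>0 = \<parallel>\<Psi>\<^sub>0\<parallel>\<^sup>2\<close>: negate \<open>\<Psi>\<^sub>0\<close>, then apply \<open>I - 2 |\<Psi>\<rangle>\<langle>\<Psi>|\<close> for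
  \<open>\<Psi> = \<Psi>\<^sub>1 + \<Psi>\<^sub>0\<close>.\<close>

definition grover_step :: "real \<Rightarrow> real \<Rightarrow> real \<times> real \<Rightarrow> real \<times> real" where
  "grover_step s\<^sub>1 s\<^sub>0 = (\<lambda>(p, q). let m = p * s\<^sub>1 - q * s\<^sub>0 in (p - 2 * m, - q - 2 * m))"

lemma funpow_grover_step_scale:
  "(grover_step s\<^sub>1 s\<^sub>0 ^^ k) (c * p, c * q)
     = (c * fst ((grover_step s\<^sub>1 s\<^sub>0 ^^ k) (p, q)), c * snd ((grover_step s\<^sub>1 s\<^sub>0 ^^ k) (p, q)))"
  by (induction k) (auto simp: grover_step_def Let_def split: prod.splits, (simp add: algebra_simps)+)

abbreviation grover_amplitudes :: "real \<Rightarrow> nat \<Rightarrow> real \<times> real" where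
  "grover_amplitudes \<theta> n \<equiv> (grover_step ((sin \<theta>)\<^sup>2) ((cos \<theta>)\<^sup>2) ^^ n) (1, 1)"

lemma grover_amplitudes_closed_form:
  "sin \<theta> * fst (grover_amplitudes \<theta> n) = sin ((2 * real n + 1) * \<theta>) \<and>
   cos \<theta> * snd (grover_amplitudes \<theta> n) = cos ((2 * real n + 1) * \<theta>)"
proof (induction n)
  case 0
  show ?case by simp
next
  case (Suc n)
  obtain p q where pq: "grover_amplitudes \<theta> n = (p, q)" by fastforce
  define a where "a = (2 * real n + 1) * \<theta>"
  have P: "sin \<theta> * p = sin a" and Q: "cos \<theta> * q = cos a"
    using Suc unfolding pq a_def by auto
  have "grover_amplitudes \<theta> (Suc n) = grover_step ((sin \<theta>)\<^sup>2) ((cos \<theta>)\<^sup>2) (p, q)"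
    using pq by simp
  also have "\<dots> = (p - 2 * (p * (sin \<theta>)\<^sup>2 - q * (cos \<theta>)\<^sup>2),
      - q - 2 * (p * (sin \<theta>)\<^sup>2 - q * (cos \<theta>)\<^sup>2))"
    by (simp add: grover_step_def Let_def)
  finally have step: "grover_amplitudes \<theta> (Suc n) = \<dots>" .
  have angle: "(2 * real (Suc n) + 1) * \<theta> = a + 2 * \<theta>"
    unfolding a_def by (simp add: algebra_simps)
  have "sin \<theta> * (p - 2 * (p * (sin \<theta>)\<^sup>2 - q * (cos \<theta>)\<^sup>2)) = sin (a + 2 * \<theta>)"
  proof -
    have "sin (a + 2 * \<theta>) = sin a * (1 - 2 * (sin \<theta>)\<^sup>2) + cos a * (2 * sin \<theta> * cos \<theta>)"
      by (simp add: sin_add sin_double cos_double_sin)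
    thus ?thesis unfolding P[symmetric] Q[symmetric] by (simp add: algebra_simps power2_eq_square)
  qed
  moreover have "cos \<theta> * (- q - 2 * (p * (sin \<theta>)\<^sup>2 - q * (cos \<theta>)\<^sup>2)) = cos (a + 2 * \<theta>)"
  proof -
    have "cos \<theta> * (- q - 2 * (p * (sin \<theta>)\<^sup>2 - q * (cos \<theta>)\<^sup>2))
        = cos \<theta> * q * (2 * (cos \<theta>)\<^sup>2 - 1) - sin \<theta> * p * (2 * sin \<theta> * cos \<theta>)"
      by (simp add: algebra_simps power2_eq_square)
    also have "\<dots> = cos a * (1 - 2 * (sin \<theta>)\<^sup>2) - sin a * (2 * sin \<theta> * cos \<theta>)"
      using P Q by (simp add: algebra_simps cos_squared_eq)
    also have "\<dots> = cos (a + 2 * \<theta>)"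
      by (simp add: cos_add sin_double cos_double_sin)
    finally show ?thesis .
  qed
  ultimately show ?case unfolding step angle by simp
qed

lemma sin_add_mult_sin_diff: "sin (x + y :: real) * sin (x - y) = (sin x)\<^sup>2 - (sin y)\<^sup>2"
proof -
  have "sin (x + y) * sin (x - y) = (sin x)\<^sup>2 * (cos y)\<^sup>2 - (cos x)\<^sup>2 * (sin y)\<^sup>2"
    unfolding sin_add sin_diff by (simp add: power2_eq_square algebra_simps)
  also have "\<dots> = (sin x)\<^sup>2 - (sin y)\<^sup>2"
    by (simp add: cos_squared_eq algebra_simps)
  finally show ?thesis .
qed

lemma cos_add_mult_sin_diff: "cos (x + y :: real) * sin (x - y) = sin x * cos x - sin y * cos y"
proof -
  have "cos (x + y) * sin (x - y)
      = sin x * cos x * ((sin y)\<^sup>2 + (cos y)\<^sup>2) - sin y * cos y * ((sin x)\<^sup>2 + (cos x)\<^sup>2)"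
    unfolding cos_add sin_diff power2_eq_square by algebra
  thus ?thesis by simp
qed

lemma sin_mult_sum_sin_odd: "sin \<theta> * (\<Sum>k<M. sin ((2 * real k + 1) * \<theta>)) = (sin (real M * \<theta>))\<^sup>2"
proof (induction M)
  case (Suc M)
  have "(sin (real (Suc M) * \<theta>))\<^sup>2 - (sin (real M * \<theta>))\<^sup>2 = sin \<theta> * sin ((2 * real M + 1) * \<theta>)"
    using sin_add_mult_sin_diff[of "real (Suc M) * \<theta>" "real M * \<theta>"] by (simp add: algebra_simps)
  thus ?case using Suc by (simp add: algebra_simps)
qed simp

lemma sin_mult_sum_cos_odd:
  "sin \<theta> * (\<Sum>k<M. cos ((2 * real k + 1) * \<theta>)) = sin (real M * \<theta>) * cos (real M * \<theta>)"
proof (induction M)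
  case (Suc M)
  have "sin (real (Suc M) * \<theta>) * cos (real (Suc M) * \<theta>) - sin (real M * \<theta>) * cos (real M * \<theta>)
      = sin \<theta> * cos ((2 * real M + 1) * \<theta>)"
    using cos_add_mult_sin_diff[of "real (Suc M) * \<theta>" "real M * \<theta>"] by (simp add: algebra_simps)
  thus ?case using Suc by (simp add: algebra_simps)
qed simp

lemma mean_grover_amplitudes_norm:
  assumes "0 < sin \<theta>" "1 \<le> M"
  shows "((\<Sum>k<M. fst (grover_amplitudes \<theta> k)) / real M)\<^sup>2 * (sin \<theta>)\<^sup>2
       + ((\<Sum>k<M. snd (grover_amplitudes \<theta> k)) / real M)\<^sup>2 * (cos \<theta>)\<^sup>2
       = (sin (real M * \<theta>))\<^sup>2 / ((real M)\<^sup>2 * (sin \<theta>)\<^sup>2)"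
proof -
  define SP where "SP = (\<Sum>k<M. sin ((2 * real k + 1) * \<theta>))"
  define SQ where "SQ = (\<Sum>k<M. cos ((2 * real k + 1) * \<theta>))"
  have p: "sin \<theta> * (\<Sum>k<M. fst (grover_amplitudes \<theta> k)) = SP"
    unfolding SP_def sum_distrib_left using grover_amplitudes_closed_form by simp
  have q: "cos \<theta> * (\<Sum>k<M. snd (grover_amplitudes \<theta> k)) = SQ"
    unfolding SQ_def sum_distrib_left using grover_amplitudes_closed_form by simp
  have "(sin \<theta>)\<^sup>2 * (SP\<^sup>2 + SQ\<^sup>2) = (sin \<theta> * SP)\<^sup>2 + (sin \<theta> * SQ)\<^sup>2"
    by (simp add: power_mult_distrib algebra_simps)
  also have "\<dots> = ((sin (real M * \<theta>))\<^sup>2)\<^sup>2 + (sin (real M * \<theta>) * cos (real M * \<theta>))\<^sup>2"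
    unfolding SP_def SQ_def sin_mult_sum_sin_odd sin_mult_sum_cos_odd ..
  also have "\<dots> = (sin (real M * \<theta>))\<^sup>2 * ((sin (real M * \<theta>))\<^sup>2 + (cos (real M * \<theta>))\<^sup>2)"
    by (simp add: power2_eq_square ring_distribs)
  also have "\<dots> = (sin (real M * \<theta>))\<^sup>2"
    by simp
  finally have "SP\<^sup>2 + SQ\<^sup>2 = (sin (real M * \<theta>))\<^sup>2 / (sin \<theta>)\<^sup>2"
    using assms by (simp add: field_simps)
  moreover have "((\<Sum>k<M. fst (grover_amplitudes \<theta> k)) / real M)\<^sup>2 * (sin \<theta>)\<^sup>2
       + ((\<Sum>k<M. snd (grover_amplitudes \<theta> k)) / real M)\<^sup>2 * (cos \<theta>)\<^sup>2 = (SP\<^sup>2 + SQ\<^sup>2) / (real M)\<^sup>2"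
    unfolding p[symmetric] q[symmetric] by (simp add: power_mult_distrib power_divide add_divide_distrib mult.commute)
  ultimately show ?thesis by simp
qed

section \<open>The algorithm\<close>

definition reflect_bad :: "nat \<Rightarrow> nat \<Rightarrow> nat \<Rightarrow> (nat \<Rightarrow> bool) \<Rightarrow> nat \<Rightarrow> idx kernel" where
  "reflect_bad nx nz na \<chi> j =
     diag_kernel (space nx nz na) (\<lambda>(x, z, a, b). if j < a \<and> \<not> \<chi> z then -1 else 1)"

definition reflect_zero :: "nat \<Rightarrow> nat \<Rightarrow> nat \<Rightarrow> nat \<Rightarrow> idx kernel" where
  "reflect_zero nx nz na j =
     diag_kernel (space nx nz na) (\<lambda>(x, z, a, b). if j < a \<and> z = 0 then -1 else 1)"

definition flip_flag_if_zero :: "idx \<Rightarrow> idx" where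
  "flip_flag_if_zero = (\<lambda>(x, z, a, b). (x, z, a, if a = 0 then \<not> b else b))"

definition grover_layer :: "nat \<Rightarrow> nat \<Rightarrow> nat \<Rightarrow> (nat \<Rightarrow> bool) \<Rightarrow> nat \<Rightarrow> gate list" where
  "grover_layer nx nz na \<chi> j =
     [Fixed (reflect_bad nx nz na \<chi> j), QueryInv, Fixed (reflect_zero nx nz na j), Query]"

definition par_est_zero :: "nat \<Rightarrow> nat \<Rightarrow> (nat \<Rightarrow> bool) \<Rightarrow> nat \<Rightarrow> gate list" where
  "par_est_zero nx nz \<chi> M =
     [Query, Fixed (ancilla_op nx nz M (uniform_reflection M))]
     @ concat (map (grover_layer nx nz M \<chi>) [0..<M - 1])
     @ [Fixed (ancilla_op nx nz M (uniform_reflection M)),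
        Fixed (perm_kernel (space nx nz M) flip_flag_if_zero)]"

lemma num_queries_par_est_zero:
  assumes "1 \<le> M"
  shows "num_queries (par_est_zero nx nz \<chi> M) = 2 * M - 1"
proof -
  have "length (filter is_query (concat (map (grover_layer nx nz M \<chi>) [0..<n]))) = 2 * n" for n
    by (induction n) (simp_all add: grover_layer_def)
  thus ?thesis using assms unfolding num_queries_def par_est_zero_def by simp
qed

interpretation flip_flag_if_zero: involution_on "space nx nz na" flip_flag_if_zero
  by unfold_locales (auto simp: flip_flag_if_zero_def space_def split: if_splits)

lemma gate_ok_par_est_zero:
  assumes "1 \<le> M"
  shows "\<forall>g\<in>set (par_est_zero nx nz \<chi> M). gate_ok (space nx nz M) g"
proof -
  have "unitary_on (space nx nz M) (reflect_bad nx nz M \<chi> j)"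
    and "unitary_on (space nx nz M) (reflect_zero nx nz M j)" for j
    unfolding reflect_bad_def reflect_zero_def by (auto intro!: unitary_on_diag_kernel)
  moreover have "unitary_on (space nx nz M) (ancilla_op nx nz M (uniform_reflection M))"
    by (intro unitary_on_ancilla_op uniform_reflection_orthogonal)
  moreover have "unitary_on (space nx nz M) (perm_kernel (space nx nz M) flip_flag_if_zero)"
    by (simp add: flip_flag_if_zero.unitary_on_perm_kernel)
  ultimately show ?thesis
    unfolding par_est_zero_def grover_layer_def by auto
qed

section \<open>Analysis for an input-preserving oracle\<close>

locale input_preserving_oracle =
  fixes nx nz :: nat and \<chi> :: "nat \<Rightarrow> bool" and M :: nat and Or :: "(nat \<times> nat) kernel"
  assumes M_pos: "1 \<le> M"
    and nz_pos: "0 < nz"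
    and unitary: "unitary_on ({0..<nx} \<times> {0..<nz}) Or"
    and keeps_input: "\<And>x. x < nx \<Longrightarrow> \<exists>\<Psi>. apply_op ({0..<nx} \<times> {0..<nz}) Or (ket (x, 0))
                          = (\<lambda>(x', z). if x' = x then \<Psi> z else 0)"
begin

abbreviation S :: "idx set" where
  "S \<equiv> space nx nz M"

definition \<Psi> :: "nat \<Rightarrow> nat \<Rightarrow> complex" where
  "\<Psi> x z = Or (x, z) (x, 0)"

lemma oracle_outside:
  assumes "\<not> (y < nx \<and> z < nz)"
  shows "Or (y, z) j = 0"
proof -
  have "(y, z) \<notin> {0..<nx} \<times> {0..<nz}" using assms by auto
  with unitary show ?thesis unfolding unitary_on_def by blast
qed

lemma oracle_column:
  assumes "x < nx" "y < nx" "z < nz"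
  shows "Or (y, z) (x, 0) = (if y = x then \<Psi> x z else 0)"
proof -
  obtain \<Psi>' where \<Psi>': "apply_op ({0..<nx} \<times> {0..<nz}) Or (ket (x, 0)) = (\<lambda>(x', z). if x' = x then \<Psi>' z else 0)"
    using keeps_input assms(1) by blast
  have "Or (y', z) (x, 0) = (if y' = x then \<Psi>' z else 0)" if "y' < nx" for y'
    using fun_cong[OF \<Psi>', of "(y', z)"] apply_op_ket[of "(x, 0)" "{0..<nx} \<times> {0..<nz}" Or "(y', z)"]
      that assms nz_pos by simp
  from this[OF assms(2)] this[OF assms(1)] show ?thesis
    unfolding \<Psi>_def by simp
qed

lemma apply_oracle_ket:
  assumes "x < nx"
  shows "apply_op ({0..<nx} \<times> {0..<nz}) Or (ket (x, 0)) = (\<lambda>(x', z). if x' = x then \<Psi> x z else 0)"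
proof (intro ext, clarify)
  fix y z
  show "apply_op ({0..<nx} \<times> {0..<nz}) Or (ket (x, 0)) (y, z) = (if y = x then \<Psi> x z else 0)"
  proof (cases "y < nx \<and> z < nz")
    case True
    thus ?thesis using assms nz_pos by (simp add: apply_op_ket oracle_column)
  next
    case False
    hence "Or (y, z) (x, 0) = 0" using oracle_outside by simp
    thus ?thesis using False by (auto simp: apply_op_def \<Psi>_def)
  qed
qed

definition weight :: "nat \<Rightarrow> bool \<Rightarrow> real" where
  "weight x t = (\<Sum>z<nz. if \<chi> z = t then (cmod (\<Psi> x z))\<^sup>2 else 0)"

lemma weight_True_add_False:
  assumes "x < nx"
  shows "weight x True + weight x False = 1"
proof -
  have "(\<Sum>k\<in>{0..<nx} \<times> {0..<nz}. cnj (Or k (x, 0)) * Or k (x, 0)) = 1"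
    using unitary assms nz_pos unfolding unitary_on_def by auto
  also have "(\<Sum>k\<in>{0..<nx} \<times> {0..<nz}. cnj (Or k (x, 0)) * Or k (x, 0))
      = (\<Sum>y<nx. if y = x then (\<Sum>z<nz. \<Psi> x z * cnj (\<Psi> x z)) else 0)"
    unfolding sum_oracle_space
  proof (intro sum.cong refl)
    fix y assume "y \<in> {..<nx}"
    thus "(\<Sum>z<nz. cnj (Or (y, z) (x, 0)) * Or (y, z) (x, 0))
        = (if y = x then \<Sum>z<nz. \<Psi> x z * cnj (\<Psi> x z) else 0)"
      using assms by (cases "y = x") (simp_all add: oracle_column mult.commute)
  qed
  also have "(\<Sum>z<nz. \<Psi> x z * cnj (\<Psi> x z)) = complex_of_real (\<Sum>z<nz. (cmod (\<Psi> x z))\<^sup>2)"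
    by (simp only: of_real_sum complex_norm_square)
  finally have "(\<Sum>z<nz. (cmod (\<Psi> x z))\<^sup>2) = 1"
    using assms by (simp del: of_real_sum)
  moreover have "weight x True + weight x False = (\<Sum>z<nz. (cmod (\<Psi> x z))\<^sup>2)"
    unfolding weight_def sum.distrib[symmetric] by (intro sum.cong) auto
  ultimately show ?thesis by simp
qed

abbreviation grover_iteration :: "nat \<Rightarrow> real \<times> real \<Rightarrow> real \<times> real" where
  "grover_iteration x \<equiv> grover_step (weight x True) (weight x False)"

text \<open>\<open>branch_state x F\<close> is \<open>\<Sum>\<^sub>a |x\<rangle> (p\<^sub>a \<Psi>\<^sub>1 + q\<^sub>a \<Psi>\<^sub>0) |a\<rangle> |0\<rangle>\<close> with \<open>(p\<^sub>a, q\<^sub>a) = F a\<close>,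
  where \<open>\<Psi>\<^sub>1\<close> and \<open>\<Psi>\<^sub>0\<close> are the good and bad parts of \<open>\<Psi> x\<close>.\<close>

definition branch_state :: "nat \<Rightarrow> (nat \<Rightarrow> real \<times> real) \<Rightarrow> idx \<Rightarrow> complex" where
  "branch_state x F = (\<lambda>(x', z, a, b). if x' = x \<and> z < nz \<and> a < M \<and> \<not> b
     then complex_of_real (if \<chi> z then fst (F a) else snd (F a)) * \<Psi> x z else 0)"

lemma branch_state_outside: "x < nx \<Longrightarrow> i \<notin> S \<Longrightarrow> branch_state x F i = 0"
  by (cases i) (auto simp: branch_state_def)

lemma branch_state_cong: "(\<And>a. a < M \<Longrightarrow> F a = G a) \<Longrightarrow> branch_state x F = branch_state x G"
  unfolding branch_state_def by (intro ext) auto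

lemma apply_query_ket:
  assumes "x < nx"
  shows "apply_op S (lift Or) (ket (x, 0, 0, False)) = branch_state x (\<lambda>a. if a = 0 then (1, 1) else (0, 0))"
proof (rule space_eqI)
  fix y z a b assume r: "y < nx" "z < nz" "a < M"
  have "apply_op S (lift Or) (ket (x, 0, 0, False)) (y, z, a, b) = lift Or (y, z, a, b) (x, 0, 0, False)"
    using assms nz_pos M_pos r by (simp add: apply_op_ket)
  also have "\<dots> = (if a = 0 \<and> \<not> b then Or (y, z) (x, 0) else 0)"
    by (simp add: lift_def)
  finally show "apply_op S (lift Or) (ket (x, 0, 0, False)) (y, z, a, b)
      = branch_state x (\<lambda>a. if a = 0 then (1, 1) else (0, 0)) (y, z, a, b)"
    using r assms by (auto simp: oracle_column branch_state_def)
qed (auto simp: apply_op_outside branch_state_outside assms)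

lemma apply_ancilla_op_branch_state:
  assumes "x < nx"
  shows "apply_op S (ancilla_op nx nz M A) (branch_state x F)
       = branch_state x (\<lambda>a. (\<Sum>a'<M. A a a' * fst (F a'), \<Sum>a'<M. A a a' * snd (F a')))"
proof (rule space_eqI)
  fix y z a b assume r: "y < nx" "z < nz" "a < M"
  have "apply_op S (ancilla_op nx nz M A) (branch_state x F) (y, z, a, b)
      = (\<Sum>a'<M. complex_of_real (A a a') * branch_state x F (y, z, a', b))"
    using r by (simp add: apply_op_ancilla_op)
  also have "\<dots> = branch_state x (\<lambda>a. (\<Sum>a'<M. A a a' * fst (F a'), \<Sum>a'<M. A a a' * snd (F a'))) (y, z, a, b)"
    using r by (auto simp: branch_state_def sum_distrib_right mult.assoc intro!: sum.cong)
  finally show "apply_op S (ancilla_op nx nz M A) (branch_state x F) (y, z, a, b) = \<dots>" .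
qed (auto simp: apply_op_outside branch_state_outside assms)

lemma apply_reflect_bad_branch_state:
  assumes "x < nx"
  shows "apply_op S (reflect_bad nx nz M \<chi> j) (branch_state x F)
       = branch_state x (\<lambda>a. if j < a then (fst (F a), - snd (F a)) else F a)"
  by (rule space_eqI) (auto simp: reflect_bad_def apply_op_diag_kernel branch_state_def
      apply_op_outside branch_state_outside assms)

lemma run_reflect_about_oracle_state:
  assumes r: "y < nx" "z < nz" "a < M"
  shows "run S Or [QueryInv, Fixed (reflect_zero nx nz M j), Query] v (y, z, a, b) =
    (if j < a then v (y, z, a, b) - 2 * \<Psi> y z * (\<Sum>z'<nz. cnj (\<Psi> y z') * v (y, z', a, b))
     else v (y, z, a, b))"
proof -
  define g where "g = (\<lambda>(y', z'). v (y', z', a, b))"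
  define T where "T k = (\<Sum>l\<in>{0..<nx} \<times> {0..<nz}. cnj (Or l k) * g l)" for k
  define v\<^sub>1 where "v\<^sub>1 = apply_op S (lift (adj Or)) v"
  define v\<^sub>2 where "v\<^sub>2 = apply_op S (reflect_zero nx nz M j) v\<^sub>1"
  have v\<^sub>1: "v\<^sub>1 (y', z', a, b) = T (y', z')" if "y' < nx" "z' < nz" for y' z'
    unfolding v\<^sub>1_def T_def using that r by (simp add: apply_op_lift sum_oracle_space adj_def g_def)
  have v\<^sub>2: "v\<^sub>2 (y', z', a, b) = (if j < a \<and> z' = 0 then -1 else 1) * T (y', z')"
    if "y' < nx" "z' < nz" for y' z'
    unfolding v\<^sub>2_def reflect_zero_def using that r v\<^sub>1 by (simp add: apply_op_diag_kernel)
  have "run S Or [QueryInv, Fixed (reflect_zero nx nz M j), Query] v (y, z, a, b)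
      = (\<Sum>y'<nx. \<Sum>z'<nz. Or (y, z) (y', z') * ((if j < a \<and> z' = 0 then -1 else 1) * T (y', z')))"
    using r by (simp add: v\<^sub>1_def[symmetric] v\<^sub>2_def[symmetric] apply_op_lift v\<^sub>2)
  also have "\<dots> = (\<Sum>y'<nx. \<Sum>z'<nz. Or (y, z) (y', z') * T (y', z'))
      - (if j < a then 2 * (\<Sum>y'<nx. Or (y, z) (y', 0) * T (y', 0)) else 0)"
  proof (cases "j < a")
    case True
    have "(\<Sum>y'<nx. \<Sum>z'<nz. Or (y, z) (y', z') * ((if j < a \<and> z' = 0 then -1 else 1) * T (y', z')))
        = (\<Sum>y'<nx. \<Sum>z'<nz. Or (y, z) (y', z') * T (y', z')
            - (if z' = 0 then 2 * (Or (y, z) (y', 0) * T (y', 0)) else 0))"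
      using True by (intro sum.cong) auto
    thus ?thesis
      using True nz_pos by (simp add: sum_subtractf sum_distrib_left)
  qed simp
  also have "(\<Sum>y'<nx. \<Sum>z'<nz. Or (y, z) (y', z') * T (y', z')) = g (y, z)"
  proof -
    have "(\<Sum>y'<nx. \<Sum>z'<nz. Or (y, z) (y', z') * T (y', z'))
        = (\<Sum>k\<in>{0..<nx} \<times> {0..<nz}. Or (y, z) k * T k)"
      by (simp add: sum_oracle_space)
    also have "\<dots> = g (y, z)"
      unfolding T_def using r by (intro unitary_on_right_inverse[OF unitary]) auto
    finally show ?thesis .
  qed
  also have "(\<Sum>y'<nx. Or (y, z) (y', 0) * T (y', 0)) = \<Psi> y z * T (y, 0)"
    using r by (simp add: oracle_column if_distrib[where f = "\<lambda>c. c * _"] cong: if_cong)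
  also have "T (y, 0) = (\<Sum>z'<nz. cnj (\<Psi> y z') * v (y, z', a, b))"
  proof -
    have "T (y, 0) = (\<Sum>y'<nx. if y' = y then (\<Sum>z'<nz. cnj (\<Psi> y z') * v (y, z', a, b)) else 0)"
      unfolding T_def sum_oracle_space using r nz_pos
      by (intro sum.cong refl) (auto simp: oracle_column g_def)
    thus ?thesis using r by simp
  qed
  finally show ?thesis by (simp add: g_def)
qed

lemma inner_oracle_state_branch_state:
  assumes "y < nx" "a < M"
  shows "(\<Sum>z<nz. cnj (\<Psi> y z) * branch_state x F (y, z, a, b))
       = (if y = x \<and> \<not> b then complex_of_real (fst (F a) * weight x True + snd (F a) * weight x False) else 0)"
proof (cases "y = x \<and> \<not> b")
  case True
  have "(\<Sum>z<nz. cnj (\<Psi> y z) * branch_state x F (y, z, a, b))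
      = (\<Sum>z<nz. complex_of_real ((if \<chi> z then fst (F a) else snd (F a)) * (cmod (\<Psi> x z))\<^sup>2))"
  proof (intro sum.cong refl)
    fix z assume "z \<in> {..<nz}"
    hence "cnj (\<Psi> y z) * branch_state x F (y, z, a, b)
        = complex_of_real (if \<chi> z then fst (F a) else snd (F a)) * (\<Psi> x z * cnj (\<Psi> x z))"
      using True assms by (simp add: branch_state_def)
    thus "cnj (\<Psi> y z) * branch_state x F (y, z, a, b)
        = complex_of_real ((if \<chi> z then fst (F a) else snd (F a)) * (cmod (\<Psi> x z))\<^sup>2)"
      by (simp only: complex_norm_square of_real_mult)
  qed
  also have "\<dots> = complex_of_real (fst (F a) * weight x True + snd (F a) * weight x False)"
    unfolding weight_def sum_distrib_left sum.distrib[symmetric] of_real_sum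
    by (intro sum.cong refl) auto
  finally show ?thesis using True by simp
qed (auto simp: branch_state_def)

lemma run_reflect_about_oracle_state_branch_state:
  assumes "x < nx"
  shows "run S Or [QueryInv, Fixed (reflect_zero nx nz M j), Query] (branch_state x F)
       = branch_state x (\<lambda>a. if j < a then
           (let m = fst (F a) * weight x True + snd (F a) * weight x False in (fst (F a) - 2 * m, snd (F a) - 2 * m))
         else F a)"
proof (rule space_eqI)
  fix y z a b assume r: "y < nx" "z < nz" "a < M"
  show "run S Or [QueryInv, Fixed (reflect_zero nx nz M j), Query] (branch_state x F) (y, z, a, b) =
      branch_state x (\<lambda>a. if j < a then
           (let m = fst (F a) * weight x True + snd (F a) * weight x False in (fst (F a) - 2 * m, snd (F a) - 2 * m))
         else F a) (y, z, a, b)"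
    unfolding run_reflect_about_oracle_state[OF r] inner_oracle_state_branch_state[OF r(1,3)]
    using r by (auto simp: branch_state_def Let_def algebra_simps)
qed (auto simp: apply_op_outside branch_state_outside assms)

lemma run_grover_layer_branch_state:
  assumes "x < nx"
  shows "run S Or (grover_layer nx nz M \<chi> j) (branch_state x F)
       = branch_state x (\<lambda>a. if j < a then grover_iteration x (F a) else F a)"
proof -
  have "run S Or (grover_layer nx nz M \<chi> j) (branch_state x F)
      = run S Or [QueryInv, Fixed (reflect_zero nx nz M j), Query]
          (branch_state x (\<lambda>a. if j < a then (fst (F a), - snd (F a)) else F a))"
    unfolding grover_layer_def by (simp add: apply_reflect_bad_branch_state assms)
  also have "\<dots> = branch_state x (\<lambda>a. if j < a then grover_iteration x (F a) else F a)"
    unfolding run_reflect_about_oracle_state_branch_state[OF assms]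
    by (rule branch_state_cong) (auto simp: grover_step_def Let_def split: prod.splits)
  finally show ?thesis .
qed

lemma run_grover_layers:
  assumes "x < nx"
  shows "run S Or (concat (map (grover_layer nx nz M \<chi>) [0..<n])) (branch_state x (\<lambda>_. P))
       = branch_state x (\<lambda>a. (grover_iteration x ^^ min a n) P)"
proof (induction n)
  case (Suc n)
  have "run S Or (concat (map (grover_layer nx nz M \<chi>) [0..<Suc n])) (branch_state x (\<lambda>_. P))
      = run S Or (grover_layer nx nz M \<chi> n) (branch_state x (\<lambda>a. (grover_iteration x ^^ min a n) P))"
    by (simp add: run_append Suc.IH)
  also have "\<dots> = branch_state x (\<lambda>a. if n < a then grover_iteration x ((grover_iteration x ^^ min a n) P)
                                        else (grover_iteration x ^^ min a n) P)"
    by (rule run_grover_layer_branch_state[OF assms])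
  also have "\<dots> = branch_state x (\<lambda>a. (grover_iteration x ^^ min a (Suc n)) P)"
  proof (rule branch_state_cong)
    fix a show "(if n < a then grover_iteration x ((grover_iteration x ^^ min a n) P)
                 else (grover_iteration x ^^ min a n) P) = (grover_iteration x ^^ min a (Suc n)) P"
      by (cases "n < a") (simp_all add: min_absorb1 min_absorb2 Suc_leI)
  qed
  finally show ?case .
qed simp

definition flagged_state :: "nat \<Rightarrow> (nat \<Rightarrow> real \<times> real) \<Rightarrow> idx \<Rightarrow> complex" where
  "flagged_state x F = (\<lambda>(x', z, a, b). if x' = x \<and> z < nz \<and> a < M \<and> b = (a = 0)
     then complex_of_real (if \<chi> z then fst (F a) else snd (F a)) * \<Psi> x z else 0)"

lemma apply_flip_flag_branch_state:
  assumes "x < nx"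
  shows "apply_op S (perm_kernel S flip_flag_if_zero) (branch_state x F) = flagged_state x F"
proof -
  have "(if i \<in> S then branch_state x F (flip_flag_if_zero i) else 0) = flagged_state x F i" for i
  proof -
    obtain y z a b where i: "i = (y, z, a, b)" by (cases i)
    show ?thesis
      unfolding i using assms M_pos
      by (cases "a = 0"; cases b) (simp_all add: flip_flag_if_zero_def branch_state_def flagged_state_def)
  qed
  thus ?thesis by (intro ext) (simp add: flip_flag_if_zero.apply_op_perm_kernel)
qed

definition output_amplitudes :: "nat \<Rightarrow> nat \<Rightarrow> real \<times> real" where
  "output_amplitudes x a =
     (\<Sum>a'<M. uniform_reflection M a a' * fst ((grover_iteration x ^^ a') (1 / sqrt M, 1 / sqrt M)),
      \<Sum>a'<M. uniform_reflection M a a' * snd ((grover_iteration x ^^ a') (1 / sqrt M, 1 / sqrt M)))"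

lemma run_par_est_zero:
  assumes "x < nx"
  shows "run S Or (par_est_zero nx nz \<chi> M) (ket (x, 0, 0, False)) = flagged_state x (output_amplitudes x)"
proof -
  let ?R = "ancilla_op nx nz M (uniform_reflection M)"
  have "apply_op S ?R (branch_state x (\<lambda>a. if a = 0 then (1, 1) else (0, 0)))
      = branch_state x (\<lambda>_. (1 / sqrt M, 1 / sqrt M))"
  proof (unfold apply_ancilla_op_branch_state[OF assms], rule branch_state_cong)
    fix a assume "a < M"
    have "(\<Sum>a'<M. uniform_reflection M a a' * fst (if a' = 0 then (1, 1) else (0, 0)))
        = uniform_reflection M a 0"
      using M_pos by (simp add: if_distrib[where f = fst] if_distrib[where f = "\<lambda>c. _ * c"] cong: if_cong)
    moreover have "(\<Sum>a'<M. uniform_reflection M a a' * snd (if a' = 0 then (1, 1) else (0, 0)))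
        = uniform_reflection M a 0"
      using M_pos by (simp add: if_distrib[where f = snd] if_distrib[where f = "\<lambda>c. _ * c"] cong: if_cong)
    ultimately show "(\<Sum>a'<M. uniform_reflection M a a' * fst (if a' = 0 then (1, 1) else (0, 0)),
        \<Sum>a'<M. uniform_reflection M a a' * snd (if a' = 0 then (1, 1) else (0, 0)))
        = (1 / sqrt M, 1 / sqrt M)"
      using uniform_reflection_first_column[OF M_pos \<open>a < M\<close>] by simp
  qed
  hence "run S Or [Query, Fixed ?R] (ket (x, 0, 0, False)) = branch_state x (\<lambda>_. (1 / sqrt M, 1 / sqrt M))"
    by (simp add: apply_query_ket assms)
  thus ?thesis
    unfolding par_est_zero_def output_amplitudes_def[abs_def]
    by (simp add: run_append run_grover_layers apply_ancilla_op_branch_state apply_flip_flag_branch_state assms)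
qed

lemma output_amplitudes_0:
  "output_amplitudes x 0 = ((\<Sum>k<M. fst ((grover_iteration x ^^ k) (1, 1))) / M,
                            (\<Sum>k<M. snd ((grover_iteration x ^^ k) (1, 1))) / M)"
proof -
  have u: "1 / sqrt (real M) * (1 / sqrt (real M)) = 1 / real M"
    using M_pos by (simp add: real_sqrt_mult[symmetric])
  have "(grover_iteration x ^^ k) (1 / sqrt M, 1 / sqrt M)
      = (1 / sqrt M * fst ((grover_iteration x ^^ k) (1, 1)), 1 / sqrt M * snd ((grover_iteration x ^^ k) (1, 1)))"
    for k using funpow_grover_step_scale[where k = k and c = "1 / sqrt M" and p = 1 and q = 1] by simp
  thus ?thesis
    unfolding output_amplitudes_def using uniform_reflection_first_row[OF M_pos]
    by (simp add: sum_divide_distrib mult.assoc[symmetric] u)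
qed

lemma flagged_state_good_norm:
  "(\<Sum>p\<in>{0..<nz} \<times> {0..<M}. (cmod (flagged_state x F (x, fst p, snd p, True)))\<^sup>2)
     = (fst (F 0))\<^sup>2 * weight x True + (snd (F 0))\<^sup>2 * weight x False"
proof -
  have "(\<Sum>p\<in>{0..<nz} \<times> {0..<M}. (cmod (flagged_state x F (x, fst p, snd p, True)))\<^sup>2)
      = (\<Sum>z<nz. \<Sum>a<M. (cmod (flagged_state x F (x, z, a, True)))\<^sup>2)"
    by (simp add: sum.cartesian_product' atLeast0LessThan)
  also have "\<dots> = (\<Sum>z<nz. (if \<chi> z then (fst (F 0))\<^sup>2 else (snd (F 0))\<^sup>2) * (cmod (\<Psi> x z))\<^sup>2)"
  proof (rule sum.cong[OF refl])
    fix z assume "z \<in> {..<nz}"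
    hence "(\<Sum>a<M. (cmod (flagged_state x F (x, z, a, True)))\<^sup>2)
        = (\<Sum>a<M. if a = 0 then (cmod (complex_of_real (if \<chi> z then fst (F 0) else snd (F 0)) * \<Psi> x z))\<^sup>2 else 0)"
      by (intro sum.cong) (auto simp: flagged_state_def)
    thus "(\<Sum>a<M. (cmod (flagged_state x F (x, z, a, True)))\<^sup>2)
        = (if \<chi> z then (fst (F 0))\<^sup>2 else (snd (F 0))\<^sup>2) * (cmod (\<Psi> x z))\<^sup>2"
      using M_pos by (simp add: norm_mult power_mult_distrib)
  qed
  also have "\<dots> = (fst (F 0))\<^sup>2 * weight x True + (snd (F 0))\<^sup>2 * weight x False"
    unfolding weight_def sum_distrib_left sum.distrib[symmetric] by (intro sum.cong) auto
  finally show ?thesis .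
qed

lemma flagged_state_decomposition:
  "\<exists>\<alpha> \<beta> u u'. (\<Sum>p\<in>{0..<nz} \<times> {0..<M}. (cmod (u p))\<^sup>2) = 1
     \<and> (\<Sum>p\<in>{0..<nz} \<times> {0..<M}. (cmod (u' p))\<^sup>2) = 1
     \<and> flagged_state x F = (\<lambda>(x', z, a, b). if x' = x then (if b then \<alpha> * u (z, a) else \<beta> * u' (z, a)) else 0)
     \<and> (cmod \<alpha>)\<^sup>2 = (fst (F 0))\<^sup>2 * weight x True + (snd (F 0))\<^sup>2 * weight x False"
proof -
  define T where "T = {0..<nz} \<times> {0..<M}"
  have T: "finite T" "(0, 0) \<in> T" unfolding T_def using nz_pos M_pos by auto
  have supp: "flagged_state x F (x, fst p, snd p, b) = 0" if "p \<notin> T" for p b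
    using that by (cases p) (auto simp: T_def flagged_state_def)
  obtain \<alpha> u where u: "(\<Sum>p\<in>T. (cmod (u p))\<^sup>2) = 1"
    and good: "\<forall>p. flagged_state x F (x, fst p, snd p, True) = \<alpha> * u p"
    and \<alpha>: "(cmod \<alpha>)\<^sup>2 = (\<Sum>p\<in>T. (cmod (flagged_state x F (x, fst p, snd p, True)))\<^sup>2)"
    using exists_normalized_factor[OF T, of "\<lambda>p. flagged_state x F (x, fst p, snd p, True)"] supp by blast
  obtain \<beta> u' where u': "(\<Sum>p\<in>T. (cmod (u' p))\<^sup>2) = 1"
    and bad: "\<forall>p. flagged_state x F (x, fst p, snd p, False) = \<beta> * u' p"
    using exists_normalized_factor[OF T, of "\<lambda>p. flagged_state x F (x, fst p, snd p, False)"] supp by blast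
  have "flagged_state x F = (\<lambda>(x', z, a, b). if x' = x then (if b then \<alpha> * u (z, a) else \<beta> * u' (z, a)) else 0)"
  proof (intro ext, clarify)
    fix y z a b
    show "flagged_state x F (y, z, a, b) = (if y = x then (if b then \<alpha> * u (z, a) else \<beta> * u' (z, a)) else 0)"
      using good[rule_format, of "(z, a)"] bad[rule_format, of "(z, a)"]
      by (cases b) (auto simp: flagged_state_def)
  qed
  with u u' \<alpha> show ?thesis
    unfolding T_def flagged_state_good_norm by blast
qed

lemma weight_True_eq:
  assumes "x < nx"
    and "apply_op ({0..<nx} \<times> {0..<nz}) Or (ket (x, 0)) = (\<lambda>(x', z). if x' = x then \<Psi>' z else 0)"
  shows "weight x True = (\<Sum>z\<in>{z. z < nz \<and> \<chi> z}. (cmod (\<Psi>' z))\<^sup>2)"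
proof -
  have "\<Psi>' z = \<Psi> x z" for z
    using fun_cong[OF assms(2), of "(x, z)"] apply_oracle_ket[OF assms(1)] by simp
  have "weight x True = (\<Sum>z\<in>{z \<in> {..<nz}. \<chi> z}. (cmod (\<Psi> x z))\<^sup>2)"
    unfolding weight_def sum.inter_filter[OF finite_lessThan] by simp
  also have "{z \<in> {..<nz}. \<chi> z} = {z. z < nz \<and> \<chi> z}"
    by auto
  finally show ?thesis
    unfolding \<open>\<And>z. \<Psi>' z = \<Psi> x z\<close> .
qed

lemma par_est_zero_amplitude:
  assumes "x < nx" and "weight x True = (sin \<theta>)\<^sup>2" and "0 < sin \<theta>"
  shows "\<exists>\<alpha> \<beta> u u'. (\<Sum>p\<in>{0..<nz} \<times> {0..<M}. (cmod (u p))\<^sup>2) = 1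
     \<and> (\<Sum>p\<in>{0..<nz} \<times> {0..<M}. (cmod (u' p))\<^sup>2) = 1
     \<and> run S Or (par_est_zero nx nz \<chi> M) (ket (x, 0, 0, False))
         = (\<lambda>(x', z, a, b). if x' = x then (if b then \<alpha> * u (z, a) else \<beta> * u' (z, a)) else 0)
     \<and> (cmod \<alpha>)\<^sup>2 = sin (real M * \<theta>) ^ 2 / ((real M)\<^sup>2 * sin \<theta> ^ 2)"
proof -
  have "weight x False = (cos \<theta>)\<^sup>2"
    using weight_True_add_False[OF assms(1)] assms(2) by (simp add: cos_squared_eq)
  hence "(fst (output_amplitudes x 0))\<^sup>2 * weight x True + (snd (output_amplitudes x 0))\<^sup>2 * weight x False
      = sin (real M * \<theta>) ^ 2 / ((real M)\<^sup>2 * sin \<theta> ^ 2)"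
    using mean_grover_amplitudes_norm[OF assms(3) M_pos] assms(2) by (simp add: output_amplitudes_0)
  thus ?thesis
    using flagged_state_decomposition[of x "output_amplitudes x"] run_par_est_zero[OF assms(1)] by simp
qed

end

lemma par_est_zero_correct:
  fixes Or :: "(nat \<times> nat) kernel"
  assumes M: "1 \<le> M" and U: "unitary_on ({0..<nx} \<times> {0..<nz}) Or"
    and H: "\<forall>x<nx. 0 < \<theta> x \<and> \<theta> x \<le> pi / 2 \<and>
             (\<exists>\<Psi>. apply_op ({0..<nx} \<times> {0..<nz}) Or (ket (x, 0)) = (\<lambda>(x', z). if x' = x then \<Psi> z else 0) \<and>
                  sin (\<theta> x) ^ 2 = (\<Sum>z\<in>{z. z < nz \<and> \<chi> z}. (cmod (\<Psi> z))\<^sup>2))"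
    and x: "x < nx"
  shows "\<exists>\<alpha> \<beta> u u'. (\<Sum>p\<in>{0..<nz} \<times> {0..<M}. (cmod (u p))\<^sup>2) = 1
     \<and> (\<Sum>p\<in>{0..<nz} \<times> {0..<M}. (cmod (u' p))\<^sup>2) = 1
     \<and> run (space nx nz M) Or (par_est_zero nx nz \<chi> M) (ket (x, 0, 0, False))
         = (\<lambda>(x', z, a, b). if x' = x then (if b then \<alpha> * u (z, a) else \<beta> * u' (z, a)) else 0)
     \<and> (cmod \<alpha>)\<^sup>2 = sin (real M * \<theta> x) ^ 2 / ((real M)\<^sup>2 * sin (\<theta> x) ^ 2)"
proof -
  obtain \<Psi>' where \<Psi>': "apply_op ({0..<nx} \<times> {0..<nz}) Or (ket (x, 0)) = (\<lambda>(x', z). if x' = x then \<Psi>' z else 0)"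
    and good: "sin (\<theta> x) ^ 2 = (\<Sum>z\<in>{z. z < nz \<and> \<chi> z}. (cmod (\<Psi>' z))\<^sup>2)"
    and \<theta>: "0 < \<theta> x" "\<theta> x \<le> pi / 2"
    using H x by blast
  have "0 < sin (\<theta> x)"
    using \<theta> by (intro sin_gt_zero) auto
  moreover have "0 < nz"
  proof (rule ccontr)
    assume "\<not> 0 < nz"
    hence "sin (\<theta> x) ^ 2 = 0" using good by simp
    thus False using \<open>0 < sin (\<theta> x)\<close> by simp
  qed
  then interpret input_preserving_oracle nx nz \<chi> M Or
    using M U H by unfold_locales blast+
  show ?thesis
    using par_est_zero_amplitude[OF x _ \<open>0 < sin (\<theta> x)\<close>] weight_True_eq[OF x \<Psi>'] good by simp
qed

theorem lemma4:
  shows "\<exists>c::real. \<forall>(nx::nat) (nz::nat) (\<chi>::nat \<Rightarrow> bool) (M::nat). M \<ge> 1 \<longrightarrow>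
    (\<exists>(na::nat) (gs::gate list).
       na \<ge> 1 \<and>
       (\<forall>g\<in>set gs. gate_ok (space nx nz na) g) \<and>
       real (num_queries gs) \<le> c * real M \<and>
       (\<forall>(Or::(nat \<times> nat) kernel) (\<theta>::nat \<Rightarrow> real).
          unitary_on ({0..<nx} \<times> {0..<nz}) Or \<and>
          (\<forall>x<nx. 0 < \<theta> x \<and> \<theta> x \<le> pi / 2 \<and>
             (\<exists>\<Psi>::nat \<Rightarrow> complex.
                apply_op ({0..<nx} \<times> {0..<nz}) Or (ket (x, 0)) =
                  (\<lambda>(x', z). if x' = x then \<Psi> z else 0) \<and>
                sin (\<theta> x) ^ 2 = (\<Sum>z\<in>{z. z < nz \<and> \<chi> z}. (cmod (\<Psi> z))\<^sup>2)))
          \<longrightarrow>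
          (\<forall>x<nx. \<exists>(\<alpha>::complex) (\<beta>::complex) (u::nat \<times> nat \<Rightarrow> complex) (u'::nat \<times> nat \<Rightarrow> complex).
             (\<Sum>p\<in>{0..<nz} \<times> {0..<na}. (cmod (u p))\<^sup>2) = 1 \<and>
             (\<Sum>p\<in>{0..<nz} \<times> {0..<na}. (cmod (u' p))\<^sup>2) = 1 \<and>
             run (space nx nz na) Or gs (ket (x, 0, 0, False)) =
               (\<lambda>(x', z, a, b). if x' = x then (if b then \<alpha> * u (z, a) else \<beta> * u' (z, a)) else 0) \<and>
             (cmod \<alpha>)\<^sup>2 = sin (real M * \<theta> x) ^ 2 / ((real M)\<^sup>2 * sin (\<theta> x) ^ 2))))"
  apply (rule exI[of _ 2], intro allI impI)
  subgoal for nx nz \<chi> M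
    using gate_ok_par_est_zero[of M nx nz \<chi>] num_queries_par_est_zero[of M nx nz \<chi>]
    by (intro exI[of _ M] exI[of _ "par_est_zero nx nz \<chi> M"] conjI allI impI par_est_zero_correct) auto
  done

end
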